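(* Let $Y_1,\dots,Y_m$ be independent $\mathbb{Z}^d$-valued random vectors, $W:=\sum_{i=1}^mY_i$, $u_i:=\min_{1\le j\le d}\{1-d_{TV}(\mathcal{L}(Y_i),\mathcal{L}(Y_i+e^{(j)}))\}$ and $s_m:=\sum_{i=1}^mu_i>0$. Then there is a universal constant $C$ such that $\max_{1\le j\le d}d_{TV}(\mathcal{L}(W),\mathcal{L}(W+e^{(j)}))\le C\,s_m^{-1/2}$.
   Context: $e^{(j)}$ is the $j$-th coordinate vector of $\mathbb{Z}^d$; $d_{TV}$ is total variation distance. *)

theory Defs
  imports "HOL-Probability.Probability"
begin

text \<open>Vectors of Z^d are represented as functions nat => int that vanish
  at all coordinates k >= d.\<close>
definition zvecs :: "nat \<Rightarrow> (nat \<Rightarrow> int) set" where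
  "zvecs d = {x. \<forall>k\<ge>d. x k = 0}"

definition unitvec :: "nat \<Rightarrow> nat \<Rightarrow> int" where
  "unitvec j = (\<lambda>k. if k = j then 1 else 0)"

definition vadd :: "(nat \<Rightarrow> int) \<Rightarrow> (nat \<Rightarrow> int) \<Rightarrow> nat \<Rightarrow> int" where
  "vadd x y = (\<lambda>k. x k + y k)"

definition dTV :: "'a pmf \<Rightarrow> 'a pmf \<Rightarrow> real" where
  "dTV p q = (SUP A. \<bar>measure_pmf.prob p A - measure_pmf.prob q A\<bar>)"

definition shift_law :: "nat \<Rightarrow> (nat \<Rightarrow> int) pmf \<Rightarrow> (nat \<Rightarrow> int) pmf" where
  "shift_law j p = map_pmf (\<lambda>x. vadd x (unitvec j)) p"

definition sum_law :: "nat \<Rightarrow> (nat \<Rightarrow> (nat \<Rightarrow> int) pmf) \<Rightarrow> (nat \<Rightarrow> int) pmf" where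
  "sum_law m p = map_pmf (\<lambda>y k. \<Sum>i<m. y i k) (Pi_pmf {..<m} (\<lambda>_. 0) p)"

end

theory Submission
  imports Defs "HOL-Library.Function_Algebras" "HOL-Library.Product_Plus"
begin

text \<open>Mineka's coupling. Fix a direction \<open>e\<close> with \<open>e + e \<noteq> 0\<close>. Every law \<open>p\<close> on an abelian group is a mixture of
  the laws of \<open>z + K e\<close>, where \<open>K\<close> is a fair binomial on \<open>n \<in> {0, 1}\<close> trials and \<open>n = 1\<close> has
  probability at least \<open>(1 - d\<^sub>T\<^sub>V(p, p + e)) / 2\<close>. A sum of independent such mixtures is again a
  mixture, now with \<open>N = n\<^sub>1 + \<dots> + n\<^sub>m\<close> trials. Shifting a fair binomial on \<open>N\<close> trials by one
  moves it by at most \<open>2 / sqrt (N + 1)\<close> in total variation (Stein's identity and Cauchy-Schwarz),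
  and \<open>E [1 / (N + 1)] \<le> 2 / (E N + 2)\<close>; Jensen's inequality then gives
  \<open>d\<^sub>T\<^sub>V(W, W + e) \<le> 4 / sqrt s\<close>.\<close>

section \<open>Discrete distributions\<close>

lemma integrable_pmf_bounded:
  fixes f :: "'a \<Rightarrow> real"
  assumes "\<And>x. \<bar>f x\<bar> \<le> B"
  shows "integrable (measure_pmf M) f"
  using assms by (intro measure_pmf.integrable_const_bound[where B = B]) auto

lemma expectation_bind_pmf:
  fixes f :: "'b \<Rightarrow> real"
  assumes "\<And>x. \<bar>f x\<bar> \<le> B"
  shows "measure_pmf.expectation (bind_pmf M N) f
       = measure_pmf.expectation M (\<lambda>x. measure_pmf.expectation (N x) f)"
  unfolding measure_pmf_bind
  using assms
  by (intro integral_bind[where K = "count_space UNIV" and B = B and B' = 1])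
     (auto intro!: measurable_pmf_measure2 measure_pmf.finite_measure_axioms
           simp: measure_pmf_in_subprob_algebra)

lemma prob_bind_pmf:
  "measure_pmf.prob (bind_pmf M N) A = measure_pmf.expectation M (\<lambda>x. measure_pmf.prob (N x) A)"
  using expectation_bind_pmf[of "indicator A" 1 M N] by (simp add: indicator_def)

lemma expectation_square_le:
  fixes f :: "'a \<Rightarrow> real"
  assumes "\<And>x. \<bar>f x\<bar> \<le> B"
  shows "(measure_pmf.expectation M f)\<^sup>2 \<le> measure_pmf.expectation M (\<lambda>x. (f x)\<^sup>2)"
proof -
  have "\<bar>(f x)\<^sup>2\<bar> \<le> B\<^sup>2" for x
    using power_mono[OF assms[of x] abs_ge_zero, of 2] by simp
  then have "measure_pmf.variance M f
      = measure_pmf.expectation M (\<lambda>x. (f x)\<^sup>2) - (measure_pmf.expectation M f)\<^sup>2"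
    by (intro measure_pmf.variance_eq integrable_pmf_bounded[OF assms] integrable_pmf_bounded)
  with measure_pmf.variance_positive[of M f] show ?thesis by simp
qed

lemma abs_prob_diff_le_1: "\<bar>measure_pmf.prob p A - measure_pmf.prob q B\<bar> \<le> 1"
  using measure_pmf.prob_le_1[of p A] measure_pmf.prob_le_1[of q B]
    measure_nonneg[of p A] measure_nonneg[of q B]
  unfolding abs_le_iff by linarith

lemma abs_prob_diff_le_dTV: "\<bar>measure_pmf.prob p A - measure_pmf.prob q A\<bar> \<le> dTV p q"
  unfolding dTV_def
  by (rule cSUP_upper) (auto intro!: bdd_aboveI[where M = 1] abs_prob_diff_le_1)

lemma dTV_leI:
  assumes "\<And>A. \<bar>measure_pmf.prob p A - measure_pmf.prob q A\<bar> \<le> c"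
  shows "dTV p q \<le> c"
  unfolding dTV_def by (rule cSUP_least) (auto intro: assms)

section \<open>Smoothing by a fair binomial\<close>

lemma binomial_stein_identity:
  fixes g :: "nat \<Rightarrow> real"
  shows "(\<Sum>k\<le>Suc n. real (Suc n choose k) * (real (Suc n) - 2 * real k) * g k)
       = real (Suc n) * (\<Sum>k\<le>n. real (n choose k) * (g k - g (Suc k)))"
proof -
  have upper: "(\<Sum>k\<le>Suc n. real (Suc n choose k) * (real (Suc n) - real k) * g k)
      = real (Suc n) * (\<Sum>k\<le>n. real (n choose k) * g k)"
  proof -
    have "real (Suc n choose k) * (real (Suc n) - real k) = real (Suc n) * real (n choose k)"
      if "k \<le> Suc n" for k
      using arg_cong[OF binomial_absorb_comp[of "Suc n" k], of real]
      unfolding of_nat_mult of_nat_diff[OF that] diff_Suc_1 by (simp only: mult.commute)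
    then have "(\<Sum>k\<le>Suc n. real (Suc n choose k) * (real (Suc n) - real k) * g k)
        = (\<Sum>k\<le>Suc n. real (Suc n) * (real (n choose k) * g k))"
      by (intro sum.cong) (simp_all add: mult.assoc)
    then show ?thesis by (simp add: sum_distrib_left)
  qed
  have lower: "(\<Sum>k\<le>Suc n. real (Suc n choose k) * real k * g k)
      = real (Suc n) * (\<Sum>k\<le>n. real (n choose k) * g (Suc k))"
  proof -
    have "real (Suc n choose Suc k) * real (Suc k) = real (Suc n) * real (n choose k)" for k
      using arg_cong[OF Suc_times_binomial[of k n], of real]
      unfolding of_nat_mult by (simp only: mult.commute)
    then show ?thesis
      by (simp add: sum.atMost_Suc_shift sum_distrib_left mult.assoc[symmetric] del: sum.atMost_Suc
                    of_nat_Suc binomial_Suc_Suc)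
  qed
  have "(\<Sum>k\<le>Suc n. real (Suc n choose k) * (real (Suc n) - 2 * real k) * g k)
      = (\<Sum>k\<le>Suc n. real (Suc n choose k) * (real (Suc n) - real k) * g k)
        - (\<Sum>k\<le>Suc n. real (Suc n choose k) * real k * g k)"
    by (simp add: sum_subtractf[symmetric] algebra_simps del: sum.atMost_Suc)
  then show ?thesis
    by (simp only: upper lower) (simp add: sum_subtractf algebra_simps)
qed

lemma binomial_second_moment:
  "(\<Sum>k\<le>Suc n. real (Suc n choose k) * (real (Suc n) - 2 * real k)\<^sup>2) = real (Suc n) * 2 ^ Suc n"
proof -
  define w where "w k = real (Suc n) - 2 * real k" for k
  have "(\<Sum>k\<le>Suc n. real (Suc n choose k) * (w k)\<^sup>2)
      = real (Suc n) * (\<Sum>k\<le>n. real (n choose k) * (w k - w (Suc k)))"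
    using binomial_stein_identity[of n w] by (simp only: w_def[symmetric] power2_eq_square mult.assoc)
  also have "\<dots> = real (Suc n) * 2 ^ Suc n"
    using arg_cong[OF choose_row_sum[of n], of real]
    by (simp add: w_def sum_distrib_right[symmetric])
  finally show ?thesis
    by (simp only: w_def)
qed

lemma binomial_shift_sum_bound:
  fixes g :: "nat \<Rightarrow> real"
  assumes g: "\<And>k. \<bar>g k\<bar> \<le> 1"
  shows "\<bar>\<Sum>k\<le>n. real (n choose k) * (g k - g (Suc k))\<bar> \<le> 2 ^ Suc n / sqrt (real (Suc n))"
proof -
  define N where "N = Suc n"
  define S where "S = (\<Sum>k\<le>n. real (n choose k) * (g k - g (Suc k)))"
  define c where "c k = real (N choose k)" for k
  define w where "w k = real N - 2 * real k" for k
  have c_nonneg: "0 \<le> c k" for k by (simp add: c_def)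
  have row_sum: "(\<Sum>k\<le>N. c k) = 2 ^ N"
    using arg_cong[OF choose_row_sum[of N], of real] by (simp add: c_def)
  have second_moment: "(\<Sum>k\<le>N. c k * (w k)\<^sup>2) = real N * 2 ^ N"
    using binomial_second_moment[of n] by (simp add: c_def w_def N_def)
  have "(real N * S)\<^sup>2 = (\<Sum>k\<le>N. sqrt (c k) * (sqrt (c k) * w k * g k))\<^sup>2"
    using binomial_stein_identity[of n g] c_nonneg
    by (simp add: S_def N_def c_def w_def mult.assoc[symmetric])
  also have "\<dots> \<le> (\<Sum>k\<le>N. (sqrt (c k))\<^sup>2) * (\<Sum>k\<le>N. (sqrt (c k) * w k * g k)\<^sup>2)"
    by (rule Cauchy_Schwarz_ineq_sum)
  also have "\<dots> \<le> 2 ^ N * (real N * 2 ^ N)"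
  proof -
    have "(sqrt (c k) * w k * g k)\<^sup>2 \<le> c k * (w k)\<^sup>2" for k
      using c_nonneg[of k] g[of k] abs_le_square_iff[of "g k" 1]
      by (simp add: power_mult_distrib mult_left_le)
    then have "(\<Sum>k\<le>N. (sqrt (c k) * w k * g k)\<^sup>2) \<le> real N * 2 ^ N"
      unfolding second_moment[symmetric] by (rule sum_mono)
    moreover have "(\<Sum>k\<le>N. (sqrt (c k))\<^sup>2) = 2 ^ N"
      using c_nonneg row_sum by simp
    ultimately show ?thesis by (simp add: mult_left_mono)
  qed
  finally have "real N * (real N * S\<^sup>2) \<le> real N * (2 ^ N)\<^sup>2"
    by (simp add: power_mult_distrib power2_eq_square algebra_simps)
  then have "real N * S\<^sup>2 \<le> (2 ^ N)\<^sup>2"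
    by (rule mult_left_le_imp_le) (simp add: N_def)
  then have "S\<^sup>2 \<le> (2 ^ N)\<^sup>2 / real N"
    by (simp add: N_def pos_le_divide_eq mult.commute)
  then have "\<bar>S\<bar> \<le> sqrt ((2 ^ N)\<^sup>2 / real N)"
    by (intro real_le_rsqrt) simp
  also have "\<dots> = 2 ^ N / sqrt (real N)"
    by (simp add: real_sqrt_divide)
  finally show ?thesis
    by (simp only: S_def N_def)
qed

lemma expectation_binomial_half:
  fixes g :: "nat \<Rightarrow> real"
  shows "measure_pmf.expectation (binomial_pmf n (1/2)) g = (\<Sum>k\<le>n. real (n choose k) * g k) / 2 ^ n"
proof -
  have "real (n choose k) * (1/2) ^ k * (1/2) ^ (n - k) = real (n choose k) / 2 ^ n"
    if "k \<le> n" for k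
    using that by (simp add: mult.assoc power_add[symmetric] power_one_over)
  then show ?thesis
    by (simp add: expectation_binomial_pmf' sum_divide_distrib)
qed

lemma binomial_expectation_shift_le:
  fixes g :: "nat \<Rightarrow> real"
  assumes "\<And>k. \<bar>g k\<bar> \<le> 1"
  shows "\<bar>measure_pmf.expectation (binomial_pmf n (1/2)) g
          - measure_pmf.expectation (binomial_pmf n (1/2)) (\<lambda>k. g (Suc k))\<bar> \<le> 2 / sqrt (real (Suc n))"
proof -
  have "\<bar>measure_pmf.expectation (binomial_pmf n (1/2)) g
          - measure_pmf.expectation (binomial_pmf n (1/2)) (\<lambda>k. g (Suc k))\<bar>
      = \<bar>\<Sum>k\<le>n. real (n choose k) * (g k - g (Suc k))\<bar> / 2 ^ n"
    by (simp add: expectation_binomial_half diff_divide_distrib[symmetric] abs_divide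
                  sum_subtractf[symmetric] algebra_simps)
  also have "\<dots> \<le> (2 ^ Suc n / sqrt (real (Suc n))) / 2 ^ n"
    by (intro divide_right_mono binomial_shift_sum_bound assms) simp
  finally show ?thesis by simp
qed

lemma binomial_pmf_add:
  assumes "q \<in> {0..1}"
  shows "bind_pmf (binomial_pmf n q) (\<lambda>k. map_pmf ((+) k) (binomial_pmf n' q)) = binomial_pmf (n + n') q"
proof (induction n')
  case 0
  then show ?case using assms by (simp add: binomial_pmf_0 bind_return_pmf')
next
  case (Suc n')
  have "binomial_pmf (n + Suc n') q
      = bind_pmf (bernoulli_pmf q) (\<lambda>b. bind_pmf (binomial_pmf n q) (\<lambda>k.
          bind_pmf (binomial_pmf n' q) (\<lambda>k'. return_pmf ((if b then 1 else 0) + (k + k')))))"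
    using assms by (simp add: binomial_pmf_Suc Suc.IH[symmetric] bind_assoc_pmf map_pmf_def bind_return_pmf)
  also have "\<dots> = bind_pmf (binomial_pmf n q) (\<lambda>k. bind_pmf (bernoulli_pmf q) (\<lambda>b.
          bind_pmf (binomial_pmf n' q) (\<lambda>k'. return_pmf ((if b then 1 else 0) + (k + k')))))"
    by (rule bind_commute_pmf)
  also have "\<dots> = bind_pmf (binomial_pmf n q) (\<lambda>k. map_pmf ((+) k) (binomial_pmf (Suc n') q))"
    using assms by (simp add: binomial_pmf_Suc map_pmf_def bind_assoc_pmf bind_return_pmf algebra_simps)
  finally show ?case by simp
qed

section \<open>Binomial walks and their mixtures\<close>

text \<open>\<open>binomial_walk e n z\<close> is the law of \<open>z + K e\<close> for a fair binomial \<open>K\<close> on \<open>n\<close> trials;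
  the multiple \<open>K e\<close> is written as a sum since an additive monoid has no scaling by naturals.\<close>

definition binomial_walk :: "'a::comm_monoid_add \<Rightarrow> nat \<Rightarrow> 'a \<Rightarrow> 'a pmf" where
  "binomial_walk e n z = map_pmf (\<lambda>k. z + (\<Sum>i<k. e)) (binomial_pmf n (1/2))"

definition binomial_mixture :: "'a::comm_monoid_add \<Rightarrow> ('a \<times> nat) pmf \<Rightarrow> 'a pmf" where
  "binomial_mixture e Q = bind_pmf Q (\<lambda>(z, n). binomial_walk e n z)"

lemma binomial_walk_0: "binomial_walk e 0 z = return_pmf z"
  by (simp add: binomial_walk_def binomial_pmf_0)

lemma binomial_walk_Suc_0:
  "binomial_walk e (Suc 0) z = map_pmf (\<lambda>b. if b then z + e else z) (bernoulli_pmf (1/2))"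
proof -
  have binomial_Suc_0: "binomial_pmf (Suc 0) (1/2) = map_pmf (\<lambda>b. if b then 1 else 0) (bernoulli_pmf (1/2))"
    using binomial_pmf_Suc[of "1/2" 0] by (simp add: binomial_pmf_0 bind_return_pmf map_pmf_def)
  show ?thesis
    unfolding binomial_walk_def binomial_Suc_0 map_pmf_comp by (intro map_pmf_cong) simp_all
qed

lemma pmf_binomial_walk_Suc_0:
  "pmf (binomial_walk e (Suc 0) z) y = (indicator {z} y + indicator {z + e} y) / 2"
  unfolding binomial_walk_Suc_0 by (simp add: map_pmf_def pmf_bind) (auto simp: indicator_def)

lemma abs_prob_binomial_walk_shift_le:
  "\<bar>measure_pmf.prob (binomial_walk e n z) A
     - measure_pmf.prob (map_pmf (\<lambda>x. x + e) (binomial_walk e n z)) A\<bar> \<le> 2 / sqrt (real (Suc n))"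
proof -
  define g :: "nat \<Rightarrow> real" where "g k = indicator A (z + (\<Sum>i<k. e))" for k
  have "measure_pmf.prob (binomial_walk e n z) A = measure_pmf.expectation (binomial_pmf n (1/2)) g"
    unfolding g_def indicator_vimage[symmetric] by (simp add: binomial_walk_def vimage_def)
  moreover have "measure_pmf.prob (map_pmf (\<lambda>x. x + e) (binomial_walk e n z)) A
      = measure_pmf.expectation (binomial_pmf n (1/2)) (\<lambda>k. g (Suc k))"
    unfolding g_def indicator_vimage[symmetric]
    by (simp add: binomial_walk_def map_pmf_comp add.assoc vimage_def)
  moreover have "\<bar>g k\<bar> \<le> 1" for k
    by (simp add: g_def)
  ultimately show ?thesis
    using binomial_expectation_shift_le by simp
qed

lemma dTV_binomial_mixture_shift_le:
  "dTV (binomial_mixture e Q) (map_pmf (\<lambda>x. x + e) (binomial_mixture e Q))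
     \<le> measure_pmf.expectation Q (\<lambda>(z, n). 2 / sqrt (real (Suc n)))"
proof (rule dTV_leI)
  fix A
  define D where "D x = measure_pmf.prob (binomial_walk e (snd x) (fst x)) A
      - measure_pmf.prob (map_pmf (\<lambda>x. x + e) (binomial_walk e (snd x) (fst x))) A" for x
  have D_bounds: "\<bar>D x\<bar> \<le> 1" "\<bar>D x\<bar> \<le> 2 / sqrt (real (Suc (snd x)))" for x
    unfolding D_def by (rule abs_prob_diff_le_1 abs_prob_binomial_walk_shift_le)+
  have bound_le_2: "\<bar>2 / sqrt (real (Suc n))\<bar> \<le> 2" for n
    by (simp add: divide_le_eq)
  have "measure_pmf.prob (binomial_mixture e Q) A
      - measure_pmf.prob (map_pmf (\<lambda>x. x + e) (binomial_mixture e Q)) A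
      = measure_pmf.expectation Q D"
    unfolding D_def binomial_mixture_def prob_bind_pmf map_bind_pmf case_prod_beta
    by (intro Bochner_Integration.integral_diff[symmetric] integrable_pmf_bounded[where B = 1]) simp_all
  also have "\<bar>\<dots>\<bar> \<le> measure_pmf.expectation Q (\<lambda>x. \<bar>D x\<bar>)"
    by (rule integral_abs_bound)
  also have "\<dots> \<le> measure_pmf.expectation Q (\<lambda>(z, n). 2 / sqrt (real (Suc n)))"
    using D_bounds bound_le_2
    by (intro integral_mono integrable_pmf_bounded) (auto simp: case_prod_beta)
  finally show "\<bar>measure_pmf.prob (binomial_mixture e Q) A
      - measure_pmf.prob (map_pmf (\<lambda>x. x + e) (binomial_mixture e Q)) A\<bar>
      \<le> measure_pmf.expectation Q (\<lambda>(z, n). 2 / sqrt (real (Suc n)))" .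
qed

lemma sum_lessThan_const_add:
  fixes e :: "'a::comm_monoid_add" and k k' :: nat
  shows "(\<Sum>i<k + k'. e) = (\<Sum>i<k. e) + (\<Sum>i<k'. e)"
  by (induction k') (simp_all add: add.assoc)

lemma binomial_walk_add:
  "bind_pmf (binomial_walk e n z) (\<lambda>w. map_pmf ((+) w) (binomial_walk e n' z'))
     = binomial_walk e (n + n') (z + z')"
proof -
  have "bind_pmf (binomial_walk e n z) (\<lambda>w. map_pmf ((+) w) (binomial_walk e n' z'))
      = map_pmf (\<lambda>k. z + z' + (\<Sum>i<k. e))
          (bind_pmf (binomial_pmf n (1/2)) (\<lambda>k. map_pmf ((+) k) (binomial_pmf n' (1/2))))"
    by (simp add: binomial_walk_def bind_map_pmf map_bind_pmf map_pmf_comp sum_lessThan_const_add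
                  algebra_simps)
  then show ?thesis
    by (simp add: binomial_pmf_add binomial_walk_def)
qed

lemma binomial_mixture_add:
  "bind_pmf (binomial_mixture e Q) (\<lambda>w. map_pmf ((+) w) (binomial_mixture e R))
     = binomial_mixture e (bind_pmf Q (\<lambda>x. map_pmf ((+) x) R))"
proof -
  have "bind_pmf (binomial_mixture e Q) (\<lambda>w. map_pmf ((+) w) (binomial_mixture e R))
      = bind_pmf Q (\<lambda>x. bind_pmf R (\<lambda>y. bind_pmf (binomial_walk e (snd x) (fst x))
          (\<lambda>w. map_pmf ((+) w) (binomial_walk e (snd y) (fst y)))))"
    unfolding binomial_mixture_def
    by (simp add: bind_assoc_pmf map_bind_pmf case_prod_beta bind_commute_pmf[of "binomial_walk _ _ _"])
  also have "\<dots> = binomial_mixture e (bind_pmf Q (\<lambda>x. map_pmf ((+) x) R))"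
    by (simp add: binomial_walk_add binomial_mixture_def bind_assoc_pmf bind_map_pmf case_prod_beta)
  finally show ?thesis .
qed

section \<open>Sums of independent random variables\<close>

definition indep_sum_pmf :: "nat \<Rightarrow> (nat \<Rightarrow> 'a::comm_monoid_add pmf) \<Rightarrow> 'a pmf" where
  "indep_sum_pmf m p = map_pmf (\<lambda>y. \<Sum>i<m. y i) (Pi_pmf {..<m} 0 p)"

lemma indep_sum_pmf_0 [simp]: "indep_sum_pmf 0 p = return_pmf 0"
  by (simp add: indep_sum_pmf_def)

lemma indep_sum_pmf_Suc:
  "indep_sum_pmf (Suc m) p = bind_pmf (indep_sum_pmf m p) (\<lambda>w. map_pmf ((+) w) (p m))"
proof -
  have "indep_sum_pmf (Suc m) p
      = bind_pmf (p m) (\<lambda>y. bind_pmf (Pi_pmf {..<m} 0 p) (\<lambda>f. return_pmf ((\<Sum>i<m. f i) + y)))"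
    unfolding indep_sum_pmf_def lessThan_Suc
    by (subst Pi_pmf_insert') (auto simp: map_bind_pmf add.commute)
  also have "\<dots> = bind_pmf (indep_sum_pmf m p) (\<lambda>w. map_pmf ((+) w) (p m))"
    by (subst bind_commute_pmf)
       (simp add: indep_sum_pmf_def bind_map_pmf map_pmf_def bind_assoc_pmf bind_return_pmf)
  finally show ?thesis .
qed

lemma map_indep_sum_pmf:
  assumes "h 0 = 0" and "\<And>x y. h (x + y) = h x + h y"
  shows "map_pmf h (indep_sum_pmf m p) = indep_sum_pmf m (\<lambda>i. map_pmf h (p i))"
proof (induction m)
  case (Suc m)
  then show ?case
    by (simp add: assms indep_sum_pmf_Suc map_bind_pmf Suc.IH[symmetric] bind_map_pmf map_pmf_comp)
qed (simp add: assms)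

lemma indep_sum_binomial_mixture:
  assumes "\<And>i. i < m \<Longrightarrow> p i = binomial_mixture e (R i)"
  shows "indep_sum_pmf m p = binomial_mixture e (indep_sum_pmf m R)"
  using assms
proof (induction m)
  case 0
  then show ?case
    by (simp add: binomial_mixture_def binomial_walk_0 zero_prod_def bind_return_pmf)
next
  case (Suc m)
  then show ?case
    by (simp add: indep_sum_pmf_Suc binomial_mixture_add)
qed

lemma expectation_pmf_01:
  fixes f :: "nat \<Rightarrow> real"
  assumes "set_pmf q \<subseteq> {0, 1}"
  shows "measure_pmf.expectation q f = (1 - pmf q 1) * f 0 + pmf q 1 * f 1"
proof -
  have "measure_pmf.expectation q f = f 0 * pmf q 0 + f 1 * pmf q 1"
    using assms by (subst integral_measure_pmf_real[where A = "{0, 1}"]) auto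
  moreover have "pmf q 0 = 1 - pmf q 1"
    using sum_pmf_eq_1[OF _ assms] by simp
  ultimately show ?thesis by (simp add: mult.commute)
qed

lemma mixture_inverse_le:
  fixes b v :: real
  assumes "b \<ge> 1" "0 \<le> v" "v \<le> 1"
  shows "(1 - v) / b + v / (b + 1) \<le> 1 / (b + v / 2)"
proof -
  have "(1 - v) / b + v / (b + 1) = (b + 1 - v) / (b * (b + 1))"
    using assms by (simp add: field_simps)
  also have "\<dots> \<le> 1 / (b + v / 2)"
  proof -
    have "0 \<le> v * (b + v - 1)"
      using assms by simp
    then have "(b + 1 - v) * (b + v / 2) \<le> b * (b + 1)"
      by (simp add: algebra_simps)
    then show ?thesis
      using assms by (simp add: divide_simps)
  qed
  finally show ?thesis .
qed

text \<open>The offset \<open>k\<close> is generalised because conditioning on the last summand turns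
  \<open>1 / (N + k)\<close> into a mixture of \<open>1 / (N' + k)\<close> and \<open>1 / (N' + k + 1)\<close>.\<close>

lemma expectation_inverse_indep_sum_le:
  fixes q :: "nat \<Rightarrow> nat pmf" and k :: real
  assumes "\<And>i. i < m \<Longrightarrow> set_pmf (q i) \<subseteq> {0, 1}" and "k \<ge> 1"
  shows "measure_pmf.expectation (indep_sum_pmf m q) (\<lambda>n. 1 / (real n + k))
       \<le> 1 / ((\<Sum>i<m. pmf (q i) 1) / 2 + k)"
  using assms
proof (induction m arbitrary: k)
  case 0
  then show ?case by simp
next
  case (Suc m)
  define v where "v = pmf (q m) 1"
  define S where "S = (\<Sum>i<m. pmf (q i) 1)"
  define E where "E k = measure_pmf.expectation (indep_sum_pmf m q) (\<lambda>n. 1 / (real n + k))" for k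
  have v: "0 \<le> v" "v \<le> 1" and S: "0 \<le> S"
    by (simp_all add: v_def S_def pmf_le_1 sum_nonneg)
  have bounded: "\<bar>1 / (real n + k')\<bar> \<le> 1" if "k' \<ge> 1" for n :: nat and k' :: real
    using that by simp
  have "measure_pmf.expectation (indep_sum_pmf (Suc m) q) (\<lambda>n. 1 / (real n + k))
      = measure_pmf.expectation (indep_sum_pmf m q)
          (\<lambda>n. (1 - v) * (1 / (real n + k)) + v * (1 / (real n + (k + 1))))"
    unfolding indep_sum_pmf_Suc
    using Suc.prems
    by (subst expectation_bind_pmf[OF bounded[OF Suc.prems(2)]])
       (simp add: expectation_pmf_01 v_def ac_simps)
  also have "\<dots> = (1 - v) * E k + v * E (k + 1)"
  proof -
    have "integrable (measure_pmf (indep_sum_pmf m q)) (\<lambda>n. 1 / (real n + k'))" if "k' \<ge> 1" for k'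
      using bounded[OF that] by (rule integrable_pmf_bounded)
    then have "integrable (measure_pmf (indep_sum_pmf m q)) (\<lambda>n. 1 / (real n + k))"
      "integrable (measure_pmf (indep_sum_pmf m q)) (\<lambda>n. 1 / (real n + (k + 1)))"
      using Suc.prems by simp_all
    then show ?thesis
      unfolding E_def by (simp only: Bochner_Integration.integral_add integrable_mult_right
                                     integral_mult_right_zero)
  qed
  also have "\<dots> \<le> (1 - v) * (1 / (S / 2 + k)) + v * (1 / (S / 2 + (k + 1)))"
    using Suc.IH[of k] Suc.IH[of "k + 1"] Suc.prems v
    by (intro add_mono mult_left_mono) (simp_all add: E_def S_def)
  also have "\<dots> \<le> 1 / (S / 2 + k + v / 2)"
    using mixture_inverse_le[of "S / 2 + k" v] Suc.prems v S by (simp add: add.assoc)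
  also have "S / 2 + k + v / 2 = (\<Sum>i<Suc m. pmf (q i) 1) / 2 + k"
    by (simp add: S_def v_def field_simps)
  finally show ?case .
qed

lemma expectation_inverse_sqrt_indep_sum_le:
  fixes q :: "nat \<Rightarrow> nat pmf"
  assumes "\<And>i. i < m \<Longrightarrow> set_pmf (q i) \<subseteq> {0, 1}" and "(\<Sum>i<m. pmf (q i) 1) > 0"
  shows "measure_pmf.expectation (indep_sum_pmf m q) (\<lambda>n. 1 / sqrt (real n + 1))
       \<le> sqrt (2 / (\<Sum>i<m. pmf (q i) 1))"
proof -
  define S where "S = (\<Sum>i<m. pmf (q i) 1)"
  have "(measure_pmf.expectation (indep_sum_pmf m q) (\<lambda>n. 1 / sqrt (real n + 1)))\<^sup>2
      \<le> measure_pmf.expectation (indep_sum_pmf m q) (\<lambda>n. (1 / sqrt (real n + 1))\<^sup>2)"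
    by (rule expectation_square_le[where B = 1]) simp
  also have "\<dots> \<le> 1 / (S / 2 + 1)"
    using expectation_inverse_indep_sum_le[of m q 1] assms(1) by (simp add: S_def power_divide)
  also have "\<dots> \<le> 2 / S"
    using assms(2) by (simp add: S_def field_simps)
  finally show ?thesis
    by (simp add: S_def real_le_rsqrt)
qed

section \<open>Splitting a law into a binomial mixture\<close>

text \<open>The assumption \<open>e + e \<noteq> 0\<close> makes \<open>x - e\<close>, \<open>x\<close> and \<open>x + e\<close> pairwise distinct.\<close>

locale shift_decomposition =
  fixes p :: "'a::ab_group_add pmf" and e :: 'a
  assumes shift_order: "e + e \<noteq> 0"
begin

definition overlap :: "'a \<Rightarrow> real" where
  "overlap x = min (pmf p x) (pmf p (x - e))"

definition down :: "'a \<Rightarrow> real" where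
  "down x = overlap x / (2 * pmf p x)"

definition up :: "'a \<Rightarrow> real" where
  "up x = overlap (x + e) / (2 * pmf p x)"

definition paired :: "'a \<Rightarrow> real" where
  "paired x = down x + up x"

text \<open>Each pair \<open>{z, z + e}\<close> receives mass \<open>overlap (z + e)\<close>, half of it from either end, and
  becomes a walk with one step from \<open>z\<close>; the rest of the mass of \<open>x\<close> stays at \<open>x\<close> with no step.\<close>

definition split_pmf :: "'a \<Rightarrow> ('a \<times> nat) pmf" where
  "split_pmf x = do {
     I \<leftarrow> bernoulli_pmf (paired x);
     if I then map_pmf (\<lambda>b. (if b then x - e else x, 1)) (bernoulli_pmf (down x / paired x))
     else return_pmf (x, 0)}"

definition mixing_law :: "('a \<times> nat) pmf" where
  "mixing_law = bind_pmf p split_pmf"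

lemma overlap_le: "overlap x \<le> pmf p x" "overlap (x + e) \<le> pmf p x"
  by (simp_all add: overlap_def)

lemma overlap_nonneg: "0 \<le> overlap x"
  by (simp add: overlap_def)

lemma pmf_mult_down: "pmf p x * down x = overlap x / 2"
  using overlap_le(1)[of x] overlap_nonneg[of x] by (cases "pmf p x = 0") (auto simp: down_def)

lemma pmf_mult_up: "pmf p x * up x = overlap (x + e) / 2"
  using overlap_le(2)[of x] overlap_nonneg[of "x + e"] by (cases "pmf p x = 0") (auto simp: up_def)

lemma down_bounds: "0 \<le> down x" "down x \<le> 1/2"
  using overlap_le(1)[of x] overlap_nonneg[of x]
  by (auto simp: down_def divide_le_eq)

lemma up_bounds: "0 \<le> up x" "up x \<le> 1/2"
  using overlap_le(2)[of x] overlap_nonneg[of "x + e"]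
  by (auto simp: up_def divide_le_eq)

lemma paired_bounds: "0 \<le> paired x" "paired x \<le> 1"
  using down_bounds[of x] up_bounds[of x] by (simp_all add: paired_def)

lemma pmf_split_walk:
  "pmf (bind_pmf (split_pmf x) (\<lambda>(z, n). binomial_walk e n z)) y
     = down x * (indicator {x - e} y + indicator {x} y) / 2
       + up x * (indicator {x} y + indicator {x + e} y) / 2
       + (1 - paired x) * indicator {x} y"
proof -
  define r where "r = down x / paired x"
  have r: "0 \<le> r" "r \<le> 1"
    using down_bounds[of x] up_bounds[of x] by (auto simp: r_def paired_def divide_le_eq)
  have paired_r: "paired x * r = down x"
    using down_bounds[of x] up_bounds[of x] by (auto simp: r_def paired_def)
  then have paired_1_r: "paired x * (1 - r) = up x"
    by (simp add: paired_def algebra_simps)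
  have "bind_pmf (split_pmf x) (\<lambda>(z, n). binomial_walk e n z)
      = bind_pmf (bernoulli_pmf (paired x)) (\<lambda>I. if I
          then bind_pmf (bernoulli_pmf r) (\<lambda>b. binomial_walk e 1 (if b then x - e else x))
          else return_pmf x)"
    unfolding split_pmf_def bind_assoc_pmf r_def
    by (rule bind_pmf_cong[OF refl]) (simp add: bind_map_pmf bind_return_pmf binomial_walk_0)
  then show ?thesis
    using paired_bounds[of x] r
    by (simp add: pmf_bind pmf_binomial_walk_Suc_0 paired_r[symmetric] paired_1_r[symmetric]
                  distrib_left distrib_right)
       (simp add: indicator_def)
qed

lemma binomial_mixture_mixing_law: "binomial_mixture e mixing_law = p"
proof (rule pmf_eqI)
  fix y
  define T where "T x = bind_pmf (split_pmf x) (\<lambda>(z, n). binomial_walk e n z)" for x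
  have distinct: "y + e \<noteq> y" "y - e \<noteq> y" "y + e \<noteq> y - e" "y + e + e \<noteq> y" "y - e - e \<noteq> y"
    using shift_order by (auto simp: algebra_simps)
  have "pmf (binomial_mixture e mixing_law) y = measure_pmf.expectation p (\<lambda>x. pmf (T x) y)"
    by (simp add: binomial_mixture_def mixing_law_def T_def bind_assoc_pmf pmf_bind)
  also have "\<dots> = (\<Sum>x\<in>{y, y + e, y - e}. pmf (T x) y * pmf p x)"
  proof (rule integral_measure_pmf_real)
    fix x
    assume "pmf (T x) y \<noteq> 0"
    then show "x \<in> {y, y + e, y - e}"
      unfolding T_def pmf_split_walk by (auto simp: indicator_def algebra_simps split: if_splits)
  qed simp
  also have "\<dots> = (down y / 2 + up y / 2 + (1 - paired y)) * pmf p y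
      + down (y + e) / 2 * pmf p (y + e) + up (y - e) / 2 * pmf p (y - e)"
    using distinct by (simp add: T_def pmf_split_walk indicator_def algebra_simps)
  also have "\<dots> = pmf p y + (pmf p (y + e) * down (y + e) - pmf p y * up y) / 2
      + (pmf p (y - e) * up (y - e) - pmf p y * down y) / 2"
    by (simp add: paired_def field_simps)
  also have "\<dots> = pmf p y"
    by (simp add: pmf_mult_down pmf_mult_up)
  finally show "pmf (binomial_mixture e mixing_law) y = pmf p y" .
qed

lemma set_pmf_snd_mixing_law: "set_pmf (map_pmf snd mixing_law) \<subseteq> {0, 1}"
  by (auto simp: mixing_law_def split_pmf_def split: if_splits)

lemma pmf_snd_mixing_law: "pmf (map_pmf snd mixing_law) 1 = measure_pmf.expectation p paired"
proof -
  have "pmf (map_pmf snd (split_pmf x)) 1 = paired x" for x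
    using paired_bounds[of x]
    by (simp add: split_pmf_def map_bind_pmf map_pmf_comp pmf_bind)
  then show ?thesis
    by (simp add: mixing_law_def map_bind_pmf pmf_bind)
qed

lemma one_minus_dTV_shift_le: "1 - dTV p (map_pmf (\<lambda>x. x + e) p) \<le> 2 * pmf (map_pmf snd mixing_law) 1"
proof -
  define A where "A = {x. pmf p (x - e) < pmf p x}"
  define B where "B = {x. pmf p x < pmf p (x + e)}"
  have integrable_indicator: "integrable (measure_pmf p) (indicator C :: 'a \<Rightarrow> real)" for C
    by (rule integrable_pmf_bounded[where B = 1]) (simp add: indicator_def)
  have "measure_pmf.prob (map_pmf (\<lambda>x. x + e) p) A = measure_pmf.prob p B"
    by (simp add: A_def B_def vimage_def)
  then have "1 - dTV p (map_pmf (\<lambda>x. x + e) p) \<le> 1 - measure_pmf.prob p A + measure_pmf.prob p B"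
    using abs_prob_diff_le_dTV[of p A "map_pmf (\<lambda>x. x + e) p"] by simp
  also have "\<dots> = measure_pmf.expectation p (\<lambda>x. 1 - indicator A x + indicator B x)"
    using integrable_indicator[of A] integrable_indicator[of B]
    by (simp add: Bochner_Integration.integral_add Bochner_Integration.integral_diff)
  also have "\<dots> \<le> measure_pmf.expectation p (\<lambda>x. 2 * paired x)"
  proof (rule integral_mono_AE)
    show "integrable (measure_pmf p) (\<lambda>x. 1 - indicator A x + indicator B x :: real)"
      using integrable_indicator[of A] integrable_indicator[of B] by simp
    show "integrable (measure_pmf p) (\<lambda>x. 2 * paired x)"
      using paired_bounds by (intro integrable_pmf_bounded[where B = 2]) simp
    show "AE x in measure_pmf p. 1 - indicator A x + indicator B x \<le> 2 * paired x"
    proof (rule AE_pmfI)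
      fix x
      assume "x \<in> set_pmf p"
      then have px: "pmf p x > 0"
        by (simp add: pmf_positive)
      have "1 - indicator A x \<le> overlap x / pmf p x"
        using px overlap_nonneg[of x] by (auto simp: A_def overlap_def indicator_def min_def)
      moreover have "indicator B x \<le> overlap (x + e) / pmf p x"
        using px overlap_nonneg[of "x + e"] by (auto simp: B_def overlap_def indicator_def min_def)
      moreover have "2 * paired x = overlap x / pmf p x + overlap (x + e) / pmf p x"
        using px by (simp add: paired_def down_def up_def field_simps)
      ultimately show "1 - indicator A x + indicator B x \<le> 2 * paired x"
        by simp
    qed
  qed
  also have "\<dots> = 2 * pmf (map_pmf snd mixing_law) 1"
    using pmf_snd_mixing_law by simp
  finally show ?thesis .
qed

end

lemma binomial_mixture_decomposition:
  fixes p :: "'a::ab_group_add pmf"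
  assumes "e + e \<noteq> 0"
  obtains R where "set_pmf (map_pmf snd R) \<subseteq> {0, 1}" and "p = binomial_mixture e R"
    and "1 - dTV p (map_pmf (\<lambda>x. x + e) p) \<le> 2 * pmf (map_pmf snd R) 1"
proof -
  interpret shift_decomposition p e
    using assms by unfold_locales
  show ?thesis
    using that set_pmf_snd_mixing_law binomial_mixture_mixing_law one_minus_dTV_shift_le by simp
qed

section \<open>The smoothness bound\<close>

lemma dTV_indep_sum_shift_le:
  fixes p :: "nat \<Rightarrow> 'a::ab_group_add pmf"
  assumes "e + e \<noteq> 0" and "0 < s"
    and "s \<le> (\<Sum>i<m. 1 - dTV (p i) (map_pmf (\<lambda>x. x + e) (p i)))"
  shows "dTV (indep_sum_pmf m p) (map_pmf (\<lambda>x. x + e) (indep_sum_pmf m p)) \<le> 4 / sqrt s"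
proof -
  have "\<exists>R. set_pmf (map_pmf snd R) \<subseteq> {0, 1} \<and> p i = binomial_mixture e R
      \<and> 1 - dTV (p i) (map_pmf (\<lambda>x. x + e) (p i)) \<le> 2 * pmf (map_pmf snd R) 1" for i
    by (rule binomial_mixture_decomposition[OF assms(1), of "p i"]) blast
  then obtain R where R_01: "\<And>i. set_pmf (map_pmf snd (R i)) \<subseteq> {0, 1}"
    and p_R: "\<And>i. p i = binomial_mixture e (R i)"
    and dTV_R: "\<And>i. 1 - dTV (p i) (map_pmf (\<lambda>x. x + e) (p i)) \<le> 2 * pmf (map_pmf snd (R i)) 1"
    by metis
  define V where "V = (\<Sum>i<m. pmf (map_pmf snd (R i)) 1)"
  have s_V: "s \<le> 2 * V"
    using assms(3) dTV_R unfolding V_def sum_distrib_left by (meson order_trans sum_mono)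
  have "dTV (indep_sum_pmf m p) (map_pmf (\<lambda>x. x + e) (indep_sum_pmf m p))
      \<le> measure_pmf.expectation (indep_sum_pmf m R) (\<lambda>(z, n). 2 / sqrt (real (Suc n)))"
    using indep_sum_binomial_mixture[of m p e R] p_R dTV_binomial_mixture_shift_le by simp
  also have "\<dots> = 2 * measure_pmf.expectation (map_pmf snd (indep_sum_pmf m R))
      (\<lambda>n. 1 / sqrt (real n + 1))"
    by (subst integral_mult_right_zero[symmetric]) (simp add: case_prod_unfold add.commute)
  also have "\<dots> \<le> 2 * sqrt (2 / V)"
    using expectation_inverse_sqrt_indep_sum_le[of m "\<lambda>i. map_pmf snd (R i)"] R_01 s_V assms(2)
    by (simp add: map_indep_sum_pmf V_def)
  also have "\<dots> \<le> 2 * sqrt (4 / s)"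
    using s_V assms(2) by (simp add: field_simps)
  also have "\<dots> = 4 / sqrt s"
    by (simp add: real_sqrt_divide)
  finally show ?thesis .
qed

lemma sum_fun_apply: "(\<Sum>i\<in>A. f i) x = (\<Sum>i\<in>A. f i x)"
  by (induction A rule: infinite_finite_induct) simp_all

lemma vadd_eq_plus: "vadd = (+)"
  by (simp add: vadd_def fun_eq_iff)

lemma sum_law_eq_indep_sum_pmf: "sum_law m p = indep_sum_pmf m p"
  by (simp add: sum_law_def indep_sum_pmf_def zero_fun_def[symmetric] sum_fun_apply[symmetric])

lemma unitvec_double_nonzero: "unitvec j + unitvec j \<noteq> 0"
  by (simp add: unitvec_def fun_eq_iff)

lemma dTV_sum_law_shift_law_le:
  assumes "0 < s" and "s \<le> (\<Sum>i<m. 1 - dTV (p i) (shift_law j (p i)))"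
  shows "dTV (sum_law m p) (shift_law j (sum_law m p)) \<le> 4 / sqrt s"
  using dTV_indep_sum_shift_le[where e = "unitvec j" and m = m and p = p] unitvec_double_nonzero assms
  by (simp add: sum_law_eq_indep_sum_pmf shift_law_def vadd_eq_plus)

theorem lemma4p1:
  shows "\<exists>C::real. \<forall>(d::nat) (m::nat) (p :: nat \<Rightarrow> (nat \<Rightarrow> int) pmf).
     d \<ge> 1 \<longrightarrow>
     (\<forall>i<m. set_pmf (p i) \<subseteq> zvecs d) \<longrightarrow>
     (let u = (\<lambda>i. Min {1 - dTV (p i) (shift_law j (p i)) | j. j < d});
          s = (\<Sum>i<m. u i)
      in s > 0 \<longrightarrow>
         Max {dTV (sum_law m p) (shift_law j (sum_law m p)) | j. j < d} \<le> C / sqrt s)"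
proof -
  have bound: "Max {dTV (sum_law m p) (shift_law j (sum_law m p)) | j. j < d} \<le> 4 / sqrt s"
    if "d \<ge> 1" and "0 < s" and s: "s = (\<Sum>i<m. Min {1 - dTV (p i) (shift_law j (p i)) | j. j < d})"
    for d m :: nat and p :: "nat \<Rightarrow> (nat \<Rightarrow> int) pmf" and s :: real
  proof (rule Max.boundedI)
    show "finite {dTV (sum_law m p) (shift_law j (sum_law m p)) | j. j < d}"
      by simp
    show "{dTV (sum_law m p) (shift_law j (sum_law m p)) | j. j < d} \<noteq> {}"
      using \<open>d \<ge> 1\<close> by (auto intro!: exI[of _ 0])
    fix a
    assume "a \<in> {dTV (sum_law m p) (shift_law j (sum_law m p)) | j. j < d}"
    then obtain j where "j < d" and a: "a = dTV (sum_law m p) (shift_law j (sum_law m p))"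
      by blast
    have "s \<le> (\<Sum>i<m. 1 - dTV (p i) (shift_law j (p i)))"
      unfolding s using \<open>j < d\<close> by (intro sum_mono Min_le) auto
    then show "a \<le> 4 / sqrt s"
      using dTV_sum_law_shift_law_le \<open>0 < s\<close> by (simp add: a)
  qed
  show ?thesis
    by (intro exI[of _ 4] allI impI) (simp add: Let_def bound)
qed

end
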